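(* Let $(X,T)$ be a topological dynamical system (a compact Hausdorff space $X$ with a continuous map $T:X\to X$) and use the uniform system of coefficients $c_S^n=2^{-n}$. Then $$\sup_{\mathscr U}\operatorname{Asc}(X,\mathscr U,T)=h_{\mathrm{top}}(X,T)\quad\text{and}\quad \sup_{\mathscr U}\operatorname{Int}(X,\mathscr U,T)=h_{\mathrm{top}}(X,T),$$ where the suprema are over all open covers $\mathscr U$ of $X$.
   Context: Notation: $n^*=\{0,1,\dots,n-1\}$; for $S\subset n^*$, $S^c=n^*\setminus S$. For an open cover $\mathscr U$ of $X$, $N(\mathscr U)$ is the minimum cardinality of a subcover, and $\mathscr U_S=\bigvee_{i\in S}T^{-i}\mathscr U$ (with $\mathscr U_\emptyset=\{X\}$). The topological average sample complexity is $\operatorname{Asc}(X,\mathscr U,T)=\lim_{n\to\infty}\frac1n\sum_{S\subset n^*}c_S^n\log N(\mathscr U_S)$ and the topological intricacy is $\operatorname{Int}(X,\mathscr U,T)=\lim_{n\to\infty}\frac1n\sum_{S\subset n^*}c_S^n\log\frac{N(\mathscr U_S)N(\mathscr U_{S^c})}{N(\mathscr U_{n^*})}$ (these limits exist). $h_{\mathrm{top}}(X,\mathscr U,T)=\lim_n\frac1n\log N(\mathscr U_{n^*})$ and $h_{\mathrm{top}}(X,T)=\sup_{\mathscr U}h_{\mathrm{top}}(X,\mathscr U,T)$ is the usual topological entropy. *)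

theory Defs
  imports "HOL-Analysis.Analysis"
begin

text \<open>Open covers of the whole (compact) space, which is the type universe.\<close>
definition open_cover :: "'a::topological_space set set \<Rightarrow> bool" where
  "open_cover U \<longleftrightarrow> (\<forall>A\<in>U. open A) \<and> \<Union>U = UNIV"

definition Ncov :: "'a set set \<Rightarrow> nat" where
  "Ncov U = (LEAST k. \<exists>V. V \<subseteq> U \<and> finite V \<and> \<Union>V = UNIV \<and> card V = k)"

text \<open>U_S = join over i in S of T^{-i} U; for S empty this is {UNIV}.\<close>
definition join_cover :: "('a \<Rightarrow> 'a) \<Rightarrow> 'a set set \<Rightarrow> nat set \<Rightarrow> 'a set set" where
  "join_cover T U S = {\<Inter>i\<in>S. (T ^^ i) -` (f i) | f. \<forall>i\<in>S. f i \<in> U}"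

definition Asc :: "('a \<Rightarrow> 'a) \<Rightarrow> 'a set set \<Rightarrow> real" where
  "Asc T U = lim (\<lambda>n. (1 / real n) *
     (\<Sum>S\<in>Pow {..<n}. (1/2)^n * ln (real (Ncov (join_cover T U S)))))"

definition Intr :: "('a \<Rightarrow> 'a) \<Rightarrow> 'a set set \<Rightarrow> real" where
  "Intr T U = lim (\<lambda>n. (1 / real n) *
     (\<Sum>S\<in>Pow {..<n}. (1/2)^n *
        ln (real (Ncov (join_cover T U S)) * real (Ncov (join_cover T U ({..<n} - S)))
            / real (Ncov (join_cover T U {..<n})))))"

definition htop_cover :: "('a \<Rightarrow> 'a) \<Rightarrow> 'a set set \<Rightarrow> real" where
  "htop_cover T U = lim (\<lambda>n. ln (real (Ncov (join_cover T U {..<n}))) / real n)"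

text \<open>Topological entropy, valued in the extended reals (it may be infinite).\<close>
definition htop :: "('a::topological_space \<Rightarrow> 'a) \<Rightarrow> ereal" where
  "htop T = (SUP U\<in>{U. open_cover U}. ereal (htop_cover T U))"

end

(* Write N(U_S) for the minimal subcover size of the join of T^-i U over i in S. For a fixed
   cover U, ln N(U_S) is monotone in S, subadditive under unions and does not grow under
   translation of S. Hence both ln N(U_{n*}) and its uniform average over the subsets S of n* are
   subadditive in n, so their growth rates h(U) and Asc(U) exist (Fekete) and Asc(U) <= h(U);
   moreover the intricacy sum is twice the average minus ln N(U_{n*}), so Int(U) = 2 Asc(U) - h(U).
   Conversely, for the refined cover V = U_{k*} one has N(V_S) = N(U_{S+k*}), and S + k* misses on
   average at most k + n 2^-k points of n*, each of which costs at most ln N(U). This gives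
   Asc(V) >= h(U) - 2^-k ln N(U) while h(V) <= h(U), so both Asc(V) and Int(V) tend to h(U)
   as k grows. *)

theory Submission
  imports Defs
begin

section \<open>Subadditive sequences\<close>

lemma subadditive_le_mult_add:
  fixes u :: "nat \<Rightarrow> real"
  assumes subadd: "\<And>m n. u (m + n) \<le> u m + u n"
  shows "u (q * k + r) \<le> real q * u k + u r"
proof (induction q)
  case (Suc q)
  have "u (Suc q * k + r) = u (k + (q * k + r))" by (simp add: algebra_simps)
  also have "\<dots> \<le> u k + u (q * k + r)" by (rule subadd)
  also have "\<dots> \<le> u k + (real q * u k + u r)" using Suc by simp
  finally show ?case by (simp add: algebra_simps)
qed simp

lemma subadditive_div_le:
  fixes u :: "nat \<Rightarrow> real"
  assumes nonneg: "\<And>n. 0 \<le> u n" and subadd: "\<And>m n. u (m + n) \<le> u m + u n"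
    and "0 < k" "0 < n"
  shows "u n / real n \<le> u k / real k + (\<Sum>j<k. u j) / real n"
proof -
  have "u n = u (n div k * k + n mod k)" by simp
  also have "\<dots> \<le> real (n div k) * u k + u (n mod k)" by (rule subadditive_le_mult_add[OF subadd])
  also have "u (n mod k) \<le> (\<Sum>j<k. u j)"
    using \<open>0 < k\<close> by (intro member_le_sum nonneg) auto
  also have "real (n div k) * u k \<le> real n / real k * u k"
  proof (intro mult_right_mono nonneg)
    have "real (n div k) * real k \<le> real n"
      by (metis of_nat_le_iff of_nat_mult div_times_less_eq_dividend)
    then show "real (n div k) \<le> real n / real k" using \<open>0 < k\<close> by (simp add: field_simps)
  qed
  finally show ?thesis using \<open>0 < n\<close> by (simp add: field_simps)
qed

lemma subadditive_LIMSEQ_Inf: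
  fixes u :: "nat \<Rightarrow> real"
  assumes nonneg: "\<And>n. 0 \<le> u n" and subadd: "\<And>m n. u (m + n) \<le> u m + u n"
  shows "(\<lambda>n. u n / real n) \<longlonglongrightarrow> (INF n\<in>{0<..}. u n / real n)"
proof (rule order_tendstoI)
  define L where "L = (INF n\<in>{0<..}. u n / real n)"
  have bdd: "bdd_below ((\<lambda>n. u n / real n) ` {0<..})"
    using nonneg by (intro bdd_belowI[of _ 0]) auto
  fix a
  show "\<forall>\<^sub>F n in sequentially. a < u n / real n" if "a < L"
  proof -
    have above: "a < u n / real n" if "0 < n" for n
      using \<open>a < L\<close> cINF_lower[OF bdd, of n] that unfolding L_def by simp
    show ?thesis by (rule eventually_mono[OF eventually_gt_at_top[of 0] above])
  qed
  show "\<forall>\<^sub>F n in sequentially. u n / real n < a" if "L < a"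
  proof -
    obtain k where k: "0 < k" "u k / real k < a"
      using \<open>L < a\<close> cINF_less_iff[OF _ bdd] unfolding L_def by auto
    have "(\<lambda>n. u k / real k + (\<Sum>j<k. u j) / real n) \<longlonglongrightarrow> u k / real k + 0"
      by (intro tendsto_intros)
    then have "\<forall>\<^sub>F n in sequentially. u k / real k + (\<Sum>j<k. u j) / real n < a"
      using k(2) by (intro order_tendstoD(2)) auto
    then show ?thesis using eventually_gt_at_top[of 0]
      by eventually_elim (smt (verit) subadditive_div_le[OF nonneg subadd k(1)])
  qed
qed

section \<open>Minimal subcovers\<close>

definition has_finite_subcover :: "'a set set \<Rightarrow> bool" where
  "has_finite_subcover U \<longleftrightarrow> (\<exists>V\<subseteq>U. finite V \<and> \<Union>V = UNIV)"

definition refines :: "'a set set \<Rightarrow> 'a set set \<Rightarrow> bool" where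
  "refines W Z \<longleftrightarrow> (\<forall>A\<in>W. \<exists>B\<in>Z. A \<subseteq> B)"

lemma Ncov_le_card:
  assumes "V \<subseteq> Z" "finite V" "\<Union>V = UNIV"
  shows "Ncov Z \<le> card V"
  unfolding Ncov_def using assms by (intro Least_le) blast

lemma Ncov_attained:
  assumes "has_finite_subcover Z"
  obtains V where "V \<subseteq> Z" "finite V" "\<Union>V = UNIV" "card V = Ncov Z"
proof -
  have "\<exists>k V. V \<subseteq> Z \<and> finite V \<and> \<Union>V = UNIV \<and> card V = k"
    using assms unfolding has_finite_subcover_def by blast
  from LeastI_ex[OF this] show ?thesis using that unfolding Ncov_def by blast
qed

lemma Ncov_pos:
  assumes "has_finite_subcover Z"
  shows "0 < Ncov Z"
proof -
  obtain V where V: "V \<subseteq> Z" "finite V" "\<Union>V = UNIV" "card V = Ncov Z"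
    by (rule Ncov_attained[OF assms])
  have "V \<noteq> {}" using V(3) by force
  with V(2,4) show ?thesis by (auto simp: card_gt_0_iff)
qed

lemma Ncov_singleton_UNIV: "Ncov {UNIV :: 'a set} = 1"
proof -
  have "Ncov {UNIV :: 'a set} \<le> 1" using Ncov_le_card[of "{UNIV}" "{UNIV}"] by simp
  moreover have "has_finite_subcover {UNIV :: 'a set}" unfolding has_finite_subcover_def by blast
  then have "0 < Ncov {UNIV :: 'a set}" by (rule Ncov_pos)
  ultimately show ?thesis by arith
qed

lemma Ncov_le_if_refines:
  assumes "refines W Z" "has_finite_subcover W"
  shows "Ncov Z \<le> Ncov W"
proof -
  obtain V where V: "V \<subseteq> W" "finite V" "\<Union>V = UNIV" "card V = Ncov W"
    by (rule Ncov_attained[OF assms(2)])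
  have "\<forall>A\<in>V. \<exists>B. B \<in> Z \<and> A \<subseteq> B" using assms(1) V(1) unfolding refines_def by blast
  then obtain g where g: "\<forall>A\<in>V. g A \<in> Z \<and> A \<subseteq> g A" by (rule bchoice[elim_format]) blast
  have "Ncov Z \<le> card (g ` V)"
  proof (rule Ncov_le_card)
    have "\<Union>V \<subseteq> \<Union>(g ` V)" using g by blast
    then show "\<Union>(g ` V) = UNIV" using V(3) by auto
  qed (use g V(2) in auto)
  also have "\<dots> \<le> card V" using V(2) by (rule card_image_le)
  finally show ?thesis using V(4) by simp
qed

lemma Ncov_le_mult:
  assumes "has_finite_subcover W" "has_finite_subcover W'"
    and "refines ((\<lambda>(A, B). A \<inter> B) ` (W \<times> W')) Z"
  shows "Ncov Z \<le> Ncov W * Ncov W'"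
proof -
  obtain V where V: "V \<subseteq> W" "finite V" "\<Union>V = UNIV" "card V = Ncov W"
    by (rule Ncov_attained[OF assms(1)])
  obtain V' where V': "V' \<subseteq> W'" "finite V'" "\<Union>V' = UNIV" "card V' = Ncov W'"
    by (rule Ncov_attained[OF assms(2)])
  define I where "I = (\<lambda>(A, B). A \<inter> B) ` (V \<times> V')"
  have I: "finite I" "\<Union>I = UNIV"
  proof -
    show "finite I" unfolding I_def using V(2) V'(2) by simp
    have "x \<in> \<Union>I" for x
    proof -
      have "x \<in> \<Union>V" "x \<in> \<Union>V'" by (simp_all add: V(3) V'(3))
      then obtain A B where "A \<in> V" "B \<in> V'" "x \<in> A" "x \<in> B" by blast
      then show ?thesis unfolding I_def by (intro UnionI[of "A \<inter> B"]) auto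
    qed
    then show "\<Union>I = UNIV" by blast
  qed
  have "I \<subseteq> (\<lambda>(A, B). A \<inter> B) ` (W \<times> W')" unfolding I_def using V(1) V'(1) by auto
  then have "refines I Z" using assms(3) unfolding refines_def by blast
  moreover have "has_finite_subcover I" unfolding has_finite_subcover_def using I by blast
  ultimately have "Ncov Z \<le> Ncov I" by (rule Ncov_le_if_refines)
  also have "\<dots> \<le> card I" using I by (intro Ncov_le_card) auto
  also have "\<dots> \<le> card (V \<times> V')" unfolding I_def using V(2) V'(2) by (intro card_image_le) simp
  finally show ?thesis using V(4) V'(4) by (simp add: card_cartesian_product)
qed

lemma Ncov_le_if_vimage_subset:
  assumes "has_finite_subcover W" "(\<lambda>A. f -` A) ` W \<subseteq> Z"
  shows "Ncov Z \<le> Ncov W"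
proof -
  obtain V where V: "V \<subseteq> W" "finite V" "\<Union>V = UNIV" "card V = Ncov W"
    by (rule Ncov_attained[OF assms(1)])
  have "f x \<in> \<Union>V" for x using V(3) by simp
  then have "\<Union>((\<lambda>A. f -` A) ` V) = UNIV" by auto
  then have "Ncov Z \<le> card ((\<lambda>A. f -` A) ` V)"
    using V(1,2) assms(2) by (intro Ncov_le_card) auto
  also have "\<dots> \<le> card V" using V(2) by (rule card_image_le)
  finally show ?thesis using V(4) by simp
qed

section \<open>Joins of a cover along orbits\<close>

lemma funpow_add_apply: "(f ^^ (m + n)) x = (f ^^ n) ((f ^^ m) x)"
  by (metis add.commute comp_apply funpow_add)

lemma join_cover_memI:
  "(\<And>i. i \<in> S \<Longrightarrow> f i \<in> U) \<Longrightarrow> (\<Inter>i\<in>S. (T ^^ i) -` f i) \<in> join_cover T U S"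
  unfolding join_cover_def by blast

lemma join_cover_memE:
  assumes "A \<in> join_cover T U S"
  obtains f where "A = (\<Inter>i\<in>S. (T ^^ i) -` f i)" "\<forall>i\<in>S. f i \<in> U"
  using assms unfolding join_cover_def by blast

lemma join_cover_empty: "join_cover T U {} = {UNIV}"
  unfolding join_cover_def by auto

lemma join_cover_mono_cover: "V \<subseteq> U \<Longrightarrow> join_cover T V S \<subseteq> join_cover T U S"
  unfolding join_cover_def by blast

lemma Union_join_cover:
  assumes "\<Union>U = UNIV"
  shows "\<Union>(join_cover T U S) = UNIV"
proof -
  have "x \<in> \<Union>(join_cover T U S)" for x
  proof -
    have "\<forall>i. \<exists>B. B \<in> U \<and> (T ^^ i) x \<in> B" using assms by (metis UNIV_I UnionE)
    then obtain f where f: "\<forall>i. f i \<in> U \<and> (T ^^ i) x \<in> f i" by metis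
    then have "(\<Inter>i\<in>S. (T ^^ i) -` f i) \<in> join_cover T U S" by (intro join_cover_memI) blast
    moreover have "x \<in> (\<Inter>i\<in>S. (T ^^ i) -` f i)" using f by blast
    ultimately show ?thesis by blast
  qed
  then show ?thesis by blast
qed

lemma finite_join_cover:
  assumes "finite U" "finite S"
  shows "finite (join_cover T U S)"
proof (rule finite_subset)
  show "join_cover T U S \<subseteq> (\<lambda>f. \<Inter>i\<in>S. (T ^^ i) -` f i) ` (\<Pi>\<^sub>E i\<in>S. U)"
  proof
    fix A assume "A \<in> join_cover T U S"
    then obtain f where "A = (\<Inter>i\<in>S. (T ^^ i) -` f i)" "\<forall>i\<in>S. f i \<in> U"
      by (rule join_cover_memE)
    then show "A \<in> (\<lambda>f. \<Inter>i\<in>S. (T ^^ i) -` f i) ` (\<Pi>\<^sub>E i\<in>S. U)"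
      by (intro image_eqI[of _ _ "restrict f S"]) auto
  qed
  show "finite ((\<lambda>f. \<Inter>i\<in>S. (T ^^ i) -` f i) ` (\<Pi>\<^sub>E i\<in>S. U))"
    using assms by (intro finite_imageI finite_PiE)
qed

lemma has_finite_subcover_join_cover:
  assumes "has_finite_subcover U" "finite S"
  shows "has_finite_subcover (join_cover T U S)"
proof -
  obtain V where "V \<subseteq> U" "finite V" "\<Union>V = UNIV"
    using assms(1) unfolding has_finite_subcover_def by blast
  then show ?thesis unfolding has_finite_subcover_def
    using assms(2) by (intro exI[of _ "join_cover T V S"])
      (simp add: join_cover_mono_cover finite_join_cover Union_join_cover)
qed

lemma refines_join_cover_subset:
  assumes "S \<subseteq> S'"
  shows "refines (join_cover T U S') (join_cover T U S)"
  unfolding refines_def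
proof
  fix A assume "A \<in> join_cover T U S'"
  then obtain f where A: "A = (\<Inter>i\<in>S'. (T ^^ i) -` f i)" "\<forall>i\<in>S'. f i \<in> U"
    by (rule join_cover_memE)
  have "(\<Inter>i\<in>S. (T ^^ i) -` f i) \<in> join_cover T U S"
    using A(2) assms by (intro join_cover_memI) blast
  moreover have "A \<subseteq> (\<Inter>i\<in>S. (T ^^ i) -` f i)" using A(1) assms by blast
  ultimately show "\<exists>B\<in>join_cover T U S. A \<subseteq> B" by blast
qed

lemma refines_join_cover_union:
  "refines ((\<lambda>(A, B). A \<inter> B) ` (join_cover T U S \<times> join_cover T U S')) (join_cover T U (S \<union> S'))"
  unfolding refines_def
proof clarify
  fix A B assume "A \<in> join_cover T U S" "B \<in> join_cover T U S'"
  obtain f where A: "A = (\<Inter>i\<in>S. (T ^^ i) -` f i)" "\<forall>i\<in>S. f i \<in> U"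
    using \<open>A \<in> join_cover T U S\<close> by (rule join_cover_memE)
  obtain g where B: "B = (\<Inter>i\<in>S'. (T ^^ i) -` g i)" "\<forall>i\<in>S'. g i \<in> U"
    using \<open>B \<in> join_cover T U S'\<close> by (rule join_cover_memE)
  define h where "h i = (if i \<in> S then f i else g i)" for i
  have "(\<Inter>i\<in>S \<union> S'. (T ^^ i) -` h i) \<in> join_cover T U (S \<union> S')"
    using A(2) B(2) unfolding h_def by (intro join_cover_memI) auto
  moreover have "A \<inter> B \<subseteq> (\<Inter>i\<in>S \<union> S'. (T ^^ i) -` h i)"
    unfolding A(1) B(1) h_def by auto
  ultimately show "\<exists>C\<in>join_cover T U (S \<union> S'). A \<inter> B \<subseteq> C" by blast
qed

lemma vimage_join_cover_shift:
  "(\<lambda>A. (T ^^ k) -` A) ` join_cover T U S \<subseteq> join_cover T U ((+) k ` S)"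
proof clarify
  fix A assume "A \<in> join_cover T U S"
  then obtain f where A: "A = (\<Inter>i\<in>S. (T ^^ i) -` f i)" "\<forall>i\<in>S. f i \<in> U"
    by (rule join_cover_memE)
  have "(T ^^ k) -` A = (\<Inter>l\<in>(+) k ` S. (T ^^ l) -` f (l - k))"
    unfolding A(1) by (auto simp: funpow_add_apply)
  moreover have "(\<Inter>l\<in>(+) k ` S. (T ^^ l) -` f (l - k)) \<in> join_cover T U ((+) k ` S)"
    using A(2) by (intro join_cover_memI) auto
  ultimately show "(T ^^ k) -` A \<in> join_cover T U ((+) k ` S)" by simp
qed

definition thicken :: "nat \<Rightarrow> nat set \<Rightarrow> nat set" where
  "thicken k S = (\<Union>i\<in>S. (+) i ` {..<k})"

lemma mem_thicken: "l \<in> thicken k S \<longleftrightarrow> (\<exists>i\<in>S. i \<le> l \<and> l < i + k)"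
proof
  assume "\<exists>i\<in>S. i \<le> l \<and> l < i + k"
  then obtain i where "i \<in> S" "l = i + (l - i)" "l - i < k" by auto
  then show "l \<in> thicken k S" unfolding thicken_def by blast
next
  assume "l \<in> thicken k S"
  then obtain i j where "i \<in> S" "j < k" "l = i + j" unfolding thicken_def by blast
  then show "\<exists>i\<in>S. i \<le> l \<and> l < i + k" by (intro bexI[of _ i]) auto
qed

lemma finite_thicken: "finite S \<Longrightarrow> finite (thicken k S)"
  unfolding thicken_def by simp

text \<open>Joining the block cover U_{k*} over S and joining U over S + k* give different covers
  (overlapping windows intersect several preimages at the same time), but each refines the other,
  so they have the same minimal subcover size.\<close>

lemma refines_join_cover_thicken:
  "refines (join_cover T U (thicken k S)) (join_cover T (join_cover T U {..<k}) S)"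
  unfolding refines_def
proof
  fix A assume "A \<in> join_cover T U (thicken k S)"
  then obtain f where A: "A = (\<Inter>l\<in>thicken k S. (T ^^ l) -` f l)"
    and f: "\<forall>l\<in>thicken k S. f l \<in> U"
    by (rule join_cover_memE)
  define g where "g i = (\<Inter>j\<in>{..<k}. (T ^^ j) -` f (i + j))" for i
  have thick: "i + j \<in> thicken k S" if "i \<in> S" "j < k" for i j
    unfolding mem_thicken using that by (intro bexI[of _ i]) auto
  have "g i \<in> join_cover T U {..<k}" if "i \<in> S" for i
    unfolding g_def using f thick[OF that] by (intro join_cover_memI) auto
  then have "(\<Inter>i\<in>S. (T ^^ i) -` g i) \<in> join_cover T (join_cover T U {..<k}) S"
    by (intro join_cover_memI)
  moreover have "A \<subseteq> (\<Inter>i\<in>S. (T ^^ i) -` g i)"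
  proof clarify
    fix x i assume "x \<in> A" "i \<in> S"
    then have "(T ^^ (i + j)) x \<in> f (i + j)" if "j < k" for j
      using thick[OF \<open>i \<in> S\<close> that] unfolding A by blast
    then show "x \<in> (T ^^ i) -` g i" unfolding g_def funpow_add_apply by simp
  qed
  ultimately show "\<exists>B\<in>join_cover T (join_cover T U {..<k}) S. A \<subseteq> B" by blast
qed

lemma refines_join_join_cover:
  "refines (join_cover T (join_cover T U {..<k}) S) (join_cover T U (thicken k S))"
  unfolding refines_def
proof
  fix A assume "A \<in> join_cover T (join_cover T U {..<k}) S"
  then obtain g where A: "A = (\<Inter>i\<in>S. (T ^^ i) -` g i)"
    and g: "\<forall>i\<in>S. g i \<in> join_cover T U {..<k}"
    by (rule join_cover_memE)
  have "\<exists>F. g i = (\<Inter>j\<in>{..<k}. (T ^^ j) -` F j) \<and> (\<forall>j\<in>{..<k}. F j \<in> U)"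
    if "i \<in> S" for i
  proof -
    have "g i \<in> join_cover T U {..<k}" using g that by blast
    then obtain F where "g i = (\<Inter>j\<in>{..<k}. (T ^^ j) -` F j)" "\<forall>j\<in>{..<k}. F j \<in> U"
      by (rule join_cover_memE)
    then show ?thesis by blast
  qed
  then have "\<forall>i\<in>S. \<exists>F. g i = (\<Inter>j\<in>{..<k}. (T ^^ j) -` F j) \<and> (\<forall>j\<in>{..<k}. F j \<in> U)"
    by blast
  from bchoice[OF this] obtain F
    where F: "\<forall>i\<in>S. g i = (\<Inter>j\<in>{..<k}. (T ^^ j) -` F i j) \<and> (\<forall>j\<in>{..<k}. F i j \<in> U)"
    by blast
  have "\<forall>l\<in>thicken k S. \<exists>i. i \<in> S \<and> i \<le> l \<and> l < i + k"
    by (auto simp: mem_thicken)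
  from bchoice[OF this] obtain \<sigma>
    where \<sigma>: "\<forall>l\<in>thicken k S. \<sigma> l \<in> S \<and> \<sigma> l \<le> l \<and> l < \<sigma> l + k"
    by blast
  define f where "f l = F (\<sigma> l) (l - \<sigma> l)" for l
  have "(\<Inter>l\<in>thicken k S. (T ^^ l) -` f l) \<in> join_cover T U (thicken k S)"
  proof (intro join_cover_memI)
    fix l assume "l \<in> thicken k S"
    then have "\<sigma> l \<in> S" "l - \<sigma> l \<in> {..<k}" using \<sigma> by auto
    then show "f l \<in> U" using F unfolding f_def by blast
  qed
  moreover have "A \<subseteq> (\<Inter>l\<in>thicken k S. (T ^^ l) -` f l)"
  proof clarify
    fix x l assume x: "x \<in> A" and l: "l \<in> thicken k S"
    define i where "i = \<sigma> l"
    have i: "i \<in> S" "l = i + (l - i)" "l - i \<in> {..<k}" using \<sigma> l unfolding i_def by auto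
    have "(T ^^ i) x \<in> (\<Inter>j\<in>{..<k}. (T ^^ j) -` F i j)"
      using x i(1) F unfolding A by auto
    then have "(T ^^ (i + (l - i))) x \<in> F i (l - i)"
      using i(3) unfolding funpow_add_apply by blast
    then show "x \<in> (T ^^ l) -` f l" using i(2) unfolding f_def i_def by simp
  qed
  ultimately show "\<exists>B\<in>join_cover T U (thicken k S). A \<subseteq> B" by blast
qed

section \<open>Uniform averages over subsets\<close>

lemma card_Pow_not_mem_thicken:
  assumes "k \<le> l" "l < n"
  shows "card (Pow {..<n} \<inter> {S. l \<notin> thicken k S}) = 2 ^ (n - k)"
proof -
  have window: "i \<in> {Suc l - k..l} \<longleftrightarrow> i \<le> l \<and> l < i + k" for i
    using assms by auto
  have "Pow {..<n} \<inter> {S. l \<notin> thicken k S} = Pow ({..<n} - {Suc l - k..l})"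
  proof (intro equalityI subsetI)
    fix S assume "S \<in> Pow {..<n} \<inter> {S. l \<notin> thicken k S}"
    then have "S \<subseteq> {..<n}" "\<forall>i\<in>S. \<not> (i \<le> l \<and> l < i + k)" unfolding mem_thicken by auto
    then show "S \<in> Pow ({..<n} - {Suc l - k..l})" using window by blast
  next
    fix S assume "S \<in> Pow ({..<n} - {Suc l - k..l})"
    then have "S \<subseteq> {..<n}" "\<forall>i\<in>S. \<not> (i \<le> l \<and> l < i + k)" using window by blast+
    then show "S \<in> Pow {..<n} \<inter> {S. l \<notin> thicken k S}" unfolding mem_thicken by blast
  qed
  moreover have "card ({..<n} - {Suc l - k..l}) = n - k"
    using assms by (subst card_Diff_subset) auto
  ultimately show ?thesis by (simp add: card_Pow)
qed

lemma avg_card_not_thicken_le: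
  "(\<Sum>S\<in>Pow {..<n}. (1/2) ^ n * real (card ({..<n} - thicken k S))) \<le> real k + real n * (1/2) ^ k"
proof -
  have "(\<Sum>S\<in>Pow {..<n}. (1/2) ^ n * real (card ({..<n} - thicken k S)))
      = (\<Sum>S\<in>Pow {..<n}. \<Sum>l<n. (1/2) ^ n * of_bool (l \<notin> thicken k S))"
  proof (rule sum.cong[OF refl])
    fix S
    have "{..<n} - thicken k S = {..<n} \<inter> {l. l \<notin> thicken k S}" by auto
    then show "(1/2) ^ n * real (card ({..<n} - thicken k S))
        = (\<Sum>l<n. (1/2) ^ n * of_bool (l \<notin> thicken k S))"
      by (simp add: sum_distrib_left[symmetric])
  qed
  also have "\<dots> = (\<Sum>l<n. (1/2) ^ n * real (card (Pow {..<n} \<inter> {S. l \<notin> thicken k S})))"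
    by (subst sum.swap) (simp add: sum_distrib_left[symmetric])
  also have "\<dots> \<le> (\<Sum>l<n. of_bool (l < k) + (1/2) ^ k)"
  proof (rule sum_mono)
    fix l assume "l \<in> {..<n}"
    show "(1/2) ^ n * real (card (Pow {..<n} \<inter> {S. l \<notin> thicken k S})) \<le> of_bool (l < k) + (1/2) ^ k"
    proof (cases "l < k")
      case True
      have "card (Pow {..<n} \<inter> {S. l \<notin> thicken k S}) \<le> card (Pow {..<n :: nat})"
        by (rule card_mono) auto
      then have "real (card (Pow {..<n} \<inter> {S. l \<notin> thicken k S})) \<le> 2 ^ n"
        by (simp add: card_Pow flip: of_nat_le_iff)
      then have "(1/2) ^ n * real (card (Pow {..<n} \<inter> {S. l \<notin> thicken k S})) \<le> (1/2) ^ n * 2 ^ n"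
        by (intro mult_left_mono) simp_all
      also have "(1/2 :: real) ^ n * 2 ^ n = 1" by (simp add: power_mult_distrib[symmetric])
      finally have "(1/2) ^ n * real (card (Pow {..<n} \<inter> {S. l \<notin> thicken k S})) \<le> 1" .
      moreover have "(1 :: real) \<le> of_bool (l < k) + (1/2) ^ k" using True by simp
      ultimately show ?thesis by linarith
    next
      case False
      then have "(1/2) ^ n * real (card (Pow {..<n} \<inter> {S. l \<notin> thicken k S}))
          = (1/2) ^ k * ((1/2) ^ (n - k) * 2 ^ (n - k))"
        using \<open>l \<in> {..<n}\<close> by (simp add: card_Pow_not_mem_thicken power_add[symmetric])
      then show ?thesis by (simp add: power_mult_distrib[symmetric])
    qed
  qed
  also have "\<dots> = real (card ({..<n} \<inter> {l. l < k})) + real n * (1/2) ^ k"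
    by (simp add: sum.distrib)
  also have "card ({..<n} \<inter> {l. l < k}) \<le> k"
    using card_mono[of "{..<k}" "{..<n} \<inter> {l. l < k}"] by auto
  finally show ?thesis by simp
qed

lemma sum_Pow_uniform_weights: "(\<Sum>S\<in>Pow {..<n}. (1/2::real) ^ n) = 1"
  by (simp add: card_Pow power_one_over)

lemma sum_Pow_uniform_weights_const: "(\<Sum>S\<in>Pow {..<n}. (1/2::real) ^ n * c) = c"
  unfolding sum_distrib_right[symmetric] sum_Pow_uniform_weights by simp

lemma sum_Pow_lessThan_add:
  fixes m n :: nat
  shows "(\<Sum>S\<in>Pow {..<m + n}. f S) = (\<Sum>(S1, S2)\<in>Pow {..<m} \<times> Pow {..<n}. f (S1 \<union> (+) m ` S2))"
proof (rule sum.reindex_bij_witness[of _ "\<lambda>S. (S \<inter> {..<m}, (\<lambda>x. x - m) ` (S - {..<m}))"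
      "\<lambda>(S1, S2). S1 \<union> (+) m ` S2", symmetric])
  fix p assume "p \<in> Pow {..<m} \<times> Pow {..<n}"
  then obtain S1 S2 where p: "p = (S1, S2)" "S1 \<subseteq> {..<m}" "S2 \<subseteq> {..<n}" by auto
  have "(S1 \<union> (+) m ` S2) - {..<m} = (+) m ` S2" using p(2) by auto
  then show "(\<lambda>S. (S \<inter> {..<m}, (\<lambda>x. x - m) ` (S - {..<m}))) ((\<lambda>(S1, S2). S1 \<union> (+) m ` S2) p) = p"
    using p by (auto simp: image_image)
  show "(\<lambda>(S1, S2). S1 \<union> (+) m ` S2) p \<in> Pow {..<m + n}" using p by auto
next
  fix S assume "S \<in> Pow {..<m + n}"
  have "(+) m ` (\<lambda>x. x - m) ` (S - {..<m}) = S - {..<m}"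
    by (auto simp: image_image image_iff)
  then show "(\<lambda>(S1, S2). S1 \<union> (+) m ` S2) ((\<lambda>S. (S \<inter> {..<m}, (\<lambda>x. x - m) ` (S - {..<m}))) S) = S"
    by auto
  show "(\<lambda>S. (S \<inter> {..<m}, (\<lambda>x. x - m) ` (S - {..<m}))) S \<in> Pow {..<m} \<times> Pow {..<n}"
    using \<open>S \<in> Pow {..<m + n}\<close> by auto
qed (simp split: prod.split)

section \<open>Growth rates of a cover\<close>

locale cover_counting =
  fixes T :: "'a \<Rightarrow> 'a" and U :: "'a set set"
  assumes has_finite_subcover_U: "has_finite_subcover U"
begin

definition N :: "nat set \<Rightarrow> nat" where "N S = Ncov (join_cover T U S)"

definition lnN :: "nat set \<Rightarrow> real" where "lnN S = ln (real (N S))"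

definition avg_lnN :: "nat \<Rightarrow> real" where
  "avg_lnN n = (\<Sum>S\<in>Pow {..<n}. (1/2) ^ n * lnN S)"

lemma has_finite_subcover_join: "finite S \<Longrightarrow> has_finite_subcover (join_cover T U S)"
  by (rule has_finite_subcover_join_cover[OF has_finite_subcover_U])

lemma N_pos: "finite S \<Longrightarrow> 0 < N S"
  unfolding N_def by (intro Ncov_pos has_finite_subcover_join)

lemma lnN_nonneg: "finite S \<Longrightarrow> 0 \<le> lnN S"
  unfolding lnN_def using N_pos by (simp add: Suc_le_eq)

lemma lnN_le_iff: "finite S \<Longrightarrow> finite S' \<Longrightarrow> lnN S \<le> lnN S' \<longleftrightarrow> N S \<le> N S'"
  unfolding lnN_def using N_pos by simp

lemma lnN_mono: "finite S' \<Longrightarrow> S \<subseteq> S' \<Longrightarrow> lnN S \<le> lnN S'"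
  unfolding lnN_le_iff[OF finite_subset] N_def
  by (intro Ncov_le_if_refines refines_join_cover_subset has_finite_subcover_join)

lemma lnN_union_le:
  assumes "finite S" "finite S'"
  shows "lnN (S \<union> S') \<le> lnN S + lnN S'"
proof -
  have "N (S \<union> S') \<le> N S * N S'"
    unfolding N_def using assms
    by (intro Ncov_le_mult has_finite_subcover_join refines_join_cover_union)
  then have "ln (real (N (S \<union> S'))) \<le> ln (real (N S) * real (N S'))"
    using N_pos assms by (subst ln_le_cancel_iff) (auto simp flip: of_nat_mult)
  then show ?thesis
    unfolding lnN_def using N_pos assms by (simp add: ln_mult)
qed

lemma lnN_shift_le: "finite S \<Longrightarrow> lnN ((+) k ` S) \<le> lnN S"
  unfolding lnN_le_iff[OF finite_imageI] N_def
  by (intro Ncov_le_if_vimage_subset[OF _ vimage_join_cover_shift] has_finite_subcover_join)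

lemma lnN_empty: "lnN {} = 0"
  unfolding lnN_def N_def join_cover_empty Ncov_singleton_UNIV by simp

lemma lnN_le_card: "finite S \<Longrightarrow> lnN S \<le> real (card S) * lnN {0}"
proof (induction S rule: finite_induct)
  case (insert j S)
  have "lnN (insert j S) \<le> lnN ((+) j ` {0}) + lnN S"
    using lnN_union_le[of "{j}" S] insert(1) by simp
  also have "lnN ((+) j ` {0}) \<le> lnN {0}" by (rule lnN_shift_le) simp
  finally show ?case using insert by (simp add: algebra_simps)
qed (simp add: lnN_empty)

lemma lnN_lessThan_subadditive: "lnN {..<m + n} \<le> lnN {..<m} + lnN {..<n}"
proof -
  have "{..<m + n} = {..<m} \<union> (+) m ` {..<n}"
  proof (intro equalityI subsetI)
    fix x assume "x \<in> {..<m + n}"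
    then show "x \<in> {..<m} \<union> (+) m ` {..<n}"
      by (cases "x < m") (auto intro!: image_eqI[of _ _ "x - m"])
  qed auto
  then have "lnN {..<m + n} \<le> lnN {..<m} + lnN ((+) m ` {..<n})"
    by (simp add: lnN_union_le)
  also have "lnN ((+) m ` {..<n}) \<le> lnN {..<n}" by (rule lnN_shift_le) simp
  finally show ?thesis by simp
qed

lemma avg_lnN_nonneg: "0 \<le> avg_lnN n"
  unfolding avg_lnN_def by (intro sum_nonneg mult_nonneg_nonneg lnN_nonneg) (auto intro: finite_subset)

lemma avg_lnN_le: "avg_lnN n \<le> lnN {..<n}"
proof -
  have "avg_lnN n \<le> (\<Sum>S\<in>Pow {..<n}. (1/2) ^ n * lnN {..<n})"
    unfolding avg_lnN_def by (intro sum_mono mult_left_mono lnN_mono) auto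
  also have "\<dots> = lnN {..<n}" by (rule sum_Pow_uniform_weights_const)
  finally show ?thesis .
qed

lemma avg_lnN_subadditive: "avg_lnN (m + n) \<le> avg_lnN m + avg_lnN n"
proof -
  have "avg_lnN (m + n) = (\<Sum>(S1, S2)\<in>Pow {..<m} \<times> Pow {..<n}.
      (1/2) ^ m * (1/2) ^ n * lnN (S1 \<union> (+) m ` S2))"
    unfolding avg_lnN_def sum_Pow_lessThan_add by (simp add: power_add)
  also have "\<dots> \<le> (\<Sum>(S1, S2)\<in>Pow {..<m} \<times> Pow {..<n}.
      (1/2) ^ m * lnN S1 * (1/2) ^ n + (1/2) ^ m * ((1/2) ^ n * lnN S2))"
  proof (intro sum_mono, clarify)
    fix S1 S2 assume S: "S1 \<subseteq> {..<m}" "S2 \<subseteq> {..<n}"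
    then have "finite S1" "finite S2" by (auto intro: finite_subset)
    then have "lnN (S1 \<union> (+) m ` S2) \<le> lnN S1 + lnN S2"
      using lnN_union_le[of S1 "(+) m ` S2"] lnN_shift_le[of S2 m] by simp
    then have "(1/2) ^ m * (1/2) ^ n * lnN (S1 \<union> (+) m ` S2)
        \<le> (1/2) ^ m * (1/2) ^ n * (lnN S1 + lnN S2)"
      by (intro mult_left_mono) simp_all
    then show "(1/2) ^ m * (1/2) ^ n * lnN (S1 \<union> (+) m ` S2)
        \<le> (1/2) ^ m * lnN S1 * (1/2) ^ n + (1/2) ^ m * ((1/2) ^ n * lnN S2)"
      by (simp add: algebra_simps)
  qed
  also have "\<dots> = (\<Sum>(S1, S2)\<in>Pow {..<m} \<times> Pow {..<n}. (1/2) ^ m * lnN S1 * (1/2) ^ n)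
      + (\<Sum>(S1, S2)\<in>Pow {..<m} \<times> Pow {..<n}. (1/2) ^ m * ((1/2) ^ n * lnN S2))"
    by (simp add: split_def sum.distrib)
  also have "\<dots> = avg_lnN m * (\<Sum>S\<in>Pow {..<n}. (1/2) ^ n)
      + (\<Sum>S\<in>Pow {..<m}. (1/2) ^ m) * avg_lnN n"
    by (simp only: avg_lnN_def sum_product sum.cartesian_product)
  also have "\<dots> = avg_lnN m + avg_lnN n" unfolding sum_Pow_uniform_weights by simp
  finally show ?thesis .
qed

lemma LIMSEQ_lnN_htop_cover: "(\<lambda>n. lnN {..<n} / real n) \<longlonglongrightarrow> htop_cover T U"
proof -
  have "(\<lambda>n. lnN {..<n} / real n) \<longlonglongrightarrow> (INF n\<in>{0<..}. lnN {..<n} / real n)"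
    by (intro subadditive_LIMSEQ_Inf lnN_nonneg lnN_lessThan_subadditive) simp
  moreover have "htop_cover T U = lim (\<lambda>n. lnN {..<n} / real n)"
    unfolding htop_cover_def lnN_def N_def ..
  ultimately show ?thesis by (simp add: limI)
qed

lemma LIMSEQ_avg_lnN_Asc: "(\<lambda>n. avg_lnN n / real n) \<longlonglongrightarrow> Asc T U"
proof -
  have "(\<lambda>n. avg_lnN n / real n) \<longlonglongrightarrow> (INF n\<in>{0<..}. avg_lnN n / real n)"
    by (intro subadditive_LIMSEQ_Inf avg_lnN_nonneg avg_lnN_subadditive)
  moreover have "Asc T U = lim (\<lambda>n. avg_lnN n / real n)"
    unfolding Asc_def avg_lnN_def lnN_def N_def by simp
  ultimately show ?thesis by (simp add: limI)
qed

lemma Asc_le_htop_cover: "Asc T U \<le> htop_cover T U"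
  by (rule LIMSEQ_le[OF LIMSEQ_avg_lnN_Asc LIMSEQ_lnN_htop_cover])
    (auto intro!: divide_right_mono avg_lnN_le)

lemma avg_lnN_compl: "(\<Sum>S\<in>Pow {..<n}. (1/2) ^ n * lnN ({..<n} - S)) = avg_lnN n"
  unfolding avg_lnN_def
  by (rule sum.reindex_bij_witness[of _ "\<lambda>S. {..<n} - S" "\<lambda>S. {..<n} - S"]) auto

lemma Intr_eq_Asc_htop_cover: "Intr T U = 2 * Asc T U - htop_cover T U"
proof -
  have "(\<Sum>S\<in>Pow {..<n}. (1/2) ^ n *
        ln (real (Ncov (join_cover T U S)) * real (Ncov (join_cover T U ({..<n} - S)))
            / real (Ncov (join_cover T U {..<n})))) = 2 * avg_lnN n - lnN {..<n}" for n
  proof -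
    have ln_ratio: "ln (real (N S) * real (N ({..<n} - S)) / real (N {..<n}))
        = lnN S + lnN ({..<n} - S) - lnN {..<n}" if "S \<in> Pow {..<n}" for S
      using that N_pos[of S] N_pos[of "{..<n} - S"] N_pos[of "{..<n}"]
      by (auto simp: lnN_def ln_div ln_mult finite_subset)
    have "(\<Sum>S\<in>Pow {..<n}. (1/2) ^ n * ln (real (N S) * real (N ({..<n} - S)) / real (N {..<n})))
        = (\<Sum>S\<in>Pow {..<n}. (1/2) ^ n * lnN S + (1/2) ^ n * lnN ({..<n} - S) - (1/2) ^ n * lnN {..<n})"
    proof (rule sum.cong[OF refl])
      fix S assume "S \<in> Pow {..<n}"
      then show "(1/2) ^ n * ln (real (N S) * real (N ({..<n} - S)) / real (N {..<n}))
          = (1/2) ^ n * lnN S + (1/2) ^ n * lnN ({..<n} - S) - (1/2) ^ n * lnN {..<n}"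
        unfolding ln_ratio[OF \<open>S \<in> Pow {..<n}\<close>] by (simp add: algebra_simps)
    qed
    also have "\<dots> = 2 * avg_lnN n - lnN {..<n}"
      unfolding sum_subtractf sum.distrib avg_lnN_compl sum_Pow_uniform_weights_const
      by (simp add: avg_lnN_def)
    finally show ?thesis unfolding N_def .
  qed
  then have "Intr T U = lim (\<lambda>n. 2 * (avg_lnN n / real n) - lnN {..<n} / real n)"
    unfolding Intr_def by (simp add: diff_divide_distrib)
  moreover have "(\<lambda>n. 2 * (avg_lnN n / real n) - lnN {..<n} / real n)
      \<longlonglongrightarrow> 2 * Asc T U - htop_cover T U"
    by (intro tendsto_intros LIMSEQ_avg_lnN_Asc LIMSEQ_lnN_htop_cover)
  ultimately show ?thesis by (simp add: limI)
qed

lemma Intr_le_htop_cover: "Intr T U \<le> htop_cover T U"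
  using Intr_eq_Asc_htop_cover Asc_le_htop_cover by simp

end


section \<open>Block refinements of a cover\<close>

context cover_counting
begin

lemma cover_counting_join: "cover_counting (join_cover T U {..<k})"
  by unfold_locales (simp add: has_finite_subcover_join)

lemma lnN_join_cover_eq:
  assumes "finite S"
  shows "cover_counting.lnN T (join_cover T U {..<k}) S = lnN (thicken k S)"
proof -
  interpret V: cover_counting T "join_cover T U {..<k}" by (rule cover_counting_join)
  have "Ncov (join_cover T (join_cover T U {..<k}) S) = Ncov (join_cover T U (thicken k S))"
  proof (rule antisym)
    show "Ncov (join_cover T (join_cover T U {..<k}) S) \<le> Ncov (join_cover T U (thicken k S))"
      using assms by (intro Ncov_le_if_refines refines_join_cover_thicken has_finite_subcover_join
          finite_thicken)
    show "Ncov (join_cover T U (thicken k S)) \<le> Ncov (join_cover T (join_cover T U {..<k}) S)"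
      using assms by (intro Ncov_le_if_refines refines_join_join_cover V.has_finite_subcover_join)
  qed
  then show ?thesis unfolding V.lnN_def V.N_def lnN_def N_def by simp
qed

lemma htop_cover_join_le: "htop_cover T (join_cover T U {..<k}) \<le> htop_cover T U"
proof -
  interpret V: cover_counting T "join_cover T U {..<k}" by (rule cover_counting_join)
  have "V.lnN {..<n} \<le> lnN {..<n} + lnN {..<k}" for n
  proof -
    have "V.lnN {..<n} = lnN (thicken k {..<n})" by (simp add: lnN_join_cover_eq)
    also have "\<dots> \<le> lnN {..<n + k}" by (intro lnN_mono) (auto simp: mem_thicken)
    also have "\<dots> \<le> lnN {..<n} + lnN {..<k}" by (rule lnN_lessThan_subadditive)
    finally show ?thesis .
  qed
  then have "V.lnN {..<n} / real n \<le> lnN {..<n} / real n + lnN {..<k} / real n" for n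
    by (simp add: divide_right_mono flip: add_divide_distrib)
  moreover have "(\<lambda>n. lnN {..<n} / real n + lnN {..<k} / real n) \<longlonglongrightarrow> htop_cover T U + 0"
    by (intro tendsto_intros LIMSEQ_lnN_htop_cover)
  ultimately show ?thesis
    by (intro LIMSEQ_le[OF V.LIMSEQ_lnN_htop_cover]) auto
qed

lemma Asc_join_ge: "htop_cover T U - lnN {0} * (1/2) ^ k \<le> Asc T (join_cover T U {..<k})"
proof -
  interpret V: cover_counting T "join_cover T U {..<k}" by (rule cover_counting_join)
  define c where "c = lnN {0}"
  have c: "0 \<le> c" unfolding c_def by (simp add: lnN_nonneg)
  have pointwise: "lnN {..<n} - c * real (card ({..<n} - thicken k S)) \<le> V.lnN S"
    if "S \<in> Pow {..<n}" for n S
  proof -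
    define D where "D = {..<n} - thicken k S"
    have "finite S" using that by (auto intro: finite_subset)
    then have fin: "finite S" "finite (thicken k S)" "finite D"
      by (simp_all add: D_def finite_thicken)
    have "lnN {..<n} \<le> lnN (thicken k S \<union> D)" using fin by (intro lnN_mono) (auto simp: D_def)
    also have "\<dots> \<le> lnN (thicken k S) + lnN D" using fin by (intro lnN_union_le)
    also have "lnN D \<le> real (card D) * c" unfolding c_def using fin by (intro lnN_le_card)
    also have "lnN (thicken k S) = V.lnN S" using fin by (simp add: lnN_join_cover_eq)
    finally show ?thesis by (simp add: D_def algebra_simps)
  qed
  have averaged: "lnN {..<n} - c * (real k + real n * (1/2) ^ k) \<le> V.avg_lnN n" for n
  proof -
    have "c * (\<Sum>S\<in>Pow {..<n}. (1/2) ^ n * real (card ({..<n} - thicken k S)))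
        \<le> c * (real k + real n * (1/2) ^ k)"
      using c by (intro mult_left_mono avg_card_not_thicken_le)
    moreover have "lnN {..<n} - c * (\<Sum>S\<in>Pow {..<n}. (1/2) ^ n * real (card ({..<n} - thicken k S)))
        = (\<Sum>S\<in>Pow {..<n}. (1/2) ^ n * (lnN {..<n} - c * real (card ({..<n} - thicken k S))))"
      unfolding right_diff_distrib sum_subtractf sum_Pow_uniform_weights_const
      by (simp add: sum_distrib_left algebra_simps)
    moreover have "\<dots> \<le> V.avg_lnN n"
      unfolding V.avg_lnN_def using pointwise by (intro sum_mono mult_left_mono) auto
    ultimately show ?thesis by linarith
  qed
  have "lnN {..<n} / real n - c * (1/2) ^ k - c * real k / real n \<le> V.avg_lnN n / real n"
    if "0 < n" for n
  proof -
    have "lnN {..<n} / real n - c * (1/2) ^ k - c * real k / real n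
        = (lnN {..<n} - c * (real k + real n * (1/2) ^ k)) / real n"
      using that by (simp add: field_simps)
    also have "\<dots> \<le> V.avg_lnN n / real n"
        by (intro divide_right_mono averaged) simp
    finally show ?thesis .
  qed
  moreover have "(\<lambda>n. lnN {..<n} / real n - c * (1/2) ^ k - c * real k / real n)
      \<longlonglongrightarrow> htop_cover T U - c * (1/2) ^ k - 0"
    by (intro tendsto_intros LIMSEQ_lnN_htop_cover)
  ultimately show ?thesis unfolding c_def
    by (intro LIMSEQ_le[OF _ V.LIMSEQ_avg_lnN_Asc]) (auto intro: exI[of _ 1])
qed

lemma Intr_join_ge: "htop_cover T U - 2 * lnN {0} * (1/2) ^ k \<le> Intr T (join_cover T U {..<k})"
proof -
  interpret V: cover_counting T "join_cover T U {..<k}" by (rule cover_counting_join)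
  show ?thesis using V.Intr_eq_Asc_htop_cover Asc_join_ge[of k] htop_cover_join_le[of k] by simp
qed

end

section \<open>Topological dynamical systems\<close>

lemma continuous_on_funpow:
  fixes T :: "'a::topological_space \<Rightarrow> 'a"
  assumes "continuous_on UNIV T"
  shows "continuous_on UNIV (T ^^ i)"
proof (induction i)
  case 0
  show ?case by (simp add: continuous_on_id')
next
  case (Suc i)
  have "continuous_on (range (T ^^ i)) T" using assms by (rule continuous_on_subset) simp
  with Suc have "continuous_on UNIV (T \<circ> (T ^^ i))" by (intro continuous_on_compose)
  then show ?case by simp
qed

lemma open_cover_join_cover:
  assumes "open_cover U" "continuous_on UNIV T" "finite S"
  shows "open_cover (join_cover T U S)"
  unfolding open_cover_def
proof
  show "\<forall>A\<in>join_cover T U S. open A"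
  proof
    fix A assume "A \<in> join_cover T U S"
    then obtain f where A: "A = (\<Inter>i\<in>S. (T ^^ i) -` f i)" "\<forall>i\<in>S. f i \<in> U"
      by (rule join_cover_memE)
    have "open ((T ^^ i) -` f i)" if "i \<in> S" for i
    proof (rule open_vimage)
      show "open (f i)" using A(2) that assms(1) unfolding open_cover_def by blast
      show "continuous_on UNIV (T ^^ i)" using assms(2) by (rule continuous_on_funpow)
    qed
    then show "open A" unfolding A(1) using assms(3) by (intro open_INT) auto
  qed
  show "\<Union>(join_cover T U S) = UNIV"
    using assms(1) unfolding open_cover_def by (intro Union_join_cover) simp
qed

lemma has_finite_subcover_if_compact:
  fixes U :: "'a::topological_space set set"
  assumes "compact (UNIV :: 'a set)" "open_cover U"
  shows "has_finite_subcover U"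
proof -
  obtain V where "V \<subseteq> U" "finite V" "UNIV \<subseteq> \<Union>V"
    using compactE[OF assms(1), of U] assms(2) unfolding open_cover_def by auto
  then show ?thesis unfolding has_finite_subcover_def by auto
qed

lemma SUP_ereal_eq_if_approx:
  assumes le: "\<And>W. W \<in> A \<Longrightarrow> f W \<le> g W"
    and approx: "\<And>W e. W \<in> A \<Longrightarrow> 0 < e \<Longrightarrow> \<exists>W'\<in>A. g W - e \<le> f W'"
  shows "(SUP W\<in>A. ereal (f W)) = (SUP W\<in>A. ereal (g W))"
proof (rule antisym)
  show "(SUP W\<in>A. ereal (f W)) \<le> (SUP W\<in>A. ereal (g W))"
    using le by (intro SUP_mono) auto
  show "(SUP W\<in>A. ereal (g W)) \<le> (SUP W\<in>A. ereal (f W))"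
  proof (rule SUP_least)
    fix W assume "W \<in> A"
    show "ereal (g W) \<le> (SUP W\<in>A. ereal (f W))"
    proof (rule ereal_le_epsilon2)
      fix e :: real assume "0 < e"
      then obtain W' where "W' \<in> A" "g W - e \<le> f W'" using approx \<open>W \<in> A\<close> by blast
      then have "ereal (g W) \<le> ereal (f W') + ereal e" by simp
      also have "\<dots> \<le> (SUP W\<in>A. ereal (f W)) + ereal e"
        using \<open>W' \<in> A\<close> by (intro add_right_mono SUP_upper)
      finally show "ereal (g W) \<le> (SUP W\<in>A. ereal (f W)) + ereal e" .
    qed
  qed
qed

lemma open_cover_with_large_Asc_Intr:
  fixes T :: "'a::topological_space \<Rightarrow> 'a"
  assumes "compact (UNIV :: 'a set)" "continuous_on UNIV T" "open_cover U" "0 < e"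
  obtains V where "open_cover V" "htop_cover T U - e \<le> Asc T V" "htop_cover T U - e \<le> Intr T V"
proof -
  interpret cover_counting T U using has_finite_subcover_if_compact[OF assms(1,3)] by unfold_locales
  have "(\<lambda>k. 2 * lnN {0} * (1/2) ^ k) \<longlonglongrightarrow> 2 * lnN {0} * 0"
    by (intro tendsto_intros) simp
  from order_tendstoD(2)[OF this] assms(4) obtain k where k: "2 * lnN {0} * (1/2) ^ k < e"
    by (auto simp: eventually_sequentially)
  have "0 \<le> lnN {0} * (1/2) ^ k" by (simp add: lnN_nonneg)
  then show ?thesis
    using that[of "join_cover T U {..<k}"] Asc_join_ge[of k] Intr_join_ge[of k] k
      open_cover_join_cover[OF assms(3,2), of "{..<k}"]
    by (auto simp: mult.assoc)
qed

theorem theorem3p1: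
  fixes T :: "'a::t2_space \<Rightarrow> 'a"
  assumes "compact (UNIV :: 'a set)"
    and "continuous_on UNIV T"
  shows "(SUP U\<in>{U. open_cover U}. ereal (Asc T U)) = htop T \<and>
         (SUP U\<in>{U. open_cover U}. ereal (Intr T U)) = htop T"
proof -
  have "Asc T U \<le> htop_cover T U \<and> Intr T U \<le> htop_cover T U"
    if "open_cover U" for U :: "'a set set"
  proof -
    interpret cover_counting T U
      using has_finite_subcover_if_compact[OF assms(1) that] by unfold_locales
    show ?thesis using Asc_le_htop_cover Intr_le_htop_cover by simp
  qed
  moreover have "\<exists>V\<in>{U. open_cover U}. htop_cover T U - e \<le> Asc T V \<and> htop_cover T U - e \<le> Intr T V"
    if "open_cover U" "0 < e" for U :: "'a set set" and e :: real
    using open_cover_with_large_Asc_Intr[OF assms that] by blast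
  ultimately show ?thesis
    unfolding htop_def by (intro conjI SUP_ereal_eq_if_approx) force+
qed

end
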